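(* In System $\mathsf{F_\wedge}$, if $\Theta, X <: S, \Theta' \vdash t : T$, then $\Theta, X <: \top, \Theta'[X\wedge S/X] \vdash t[X\wedge S/X] : T[X \wedge S/X]$.
   Context: System $\mathsf{F_\wedge}$: raw types $T ::= \top \mid X \mid T \to T \mid \forall X.T \mid T \wedge T$ ($\forall X.T$ means $\forall(X<:\top).T$), up to $\alpha$-conversion. Contexts: finite sequences of $X<:T$ or $x:T$ with distinct variables, each type well-formed over the preceding part. Subtyping rules: (Var) $\Theta,X<:T,\Theta'\vdash X<:T$; (Top) $T<:\top$; (Refl); (Trans); ($\to$) from $S'<:S$, $T<:T'$ infer $S\to T<:S'\to T'$; ($\forall$) from $\Theta,X<:\top\vdash S<:T$ infer $\Theta\vdash\forall X.S<:\forall X.T$; (meet) $S\wedge S'<:S$, $S\wedge S'<:S'$, from $T<:S$, $T<:S'$ infer $T<:S\wedge S'$. Raw terms $t ::= \mathsf{top} \mid x \mid \lambda(x:T).t \mid \Lambda(X<:T).t \mid t\,t \mid t\{T\}$. Typing rules: $\Theta\vdash\mathsf{top}:\top$; $\Theta,x:T,\Theta'\vdash x:T$; (sub) from $t:T$ and $T<:T'$ infer $t:T'$; from $\Theta,x:S\vdash t:T$ infer $\Theta\vdash\lambda(x:S).t:S\to T$; from $t:S\to T$ and $s:S$ infer $t\,s:T$; from $\Theta,X<:S\vdash t:T$ infer $\Theta\vdash\Lambda(X<:S).t:\forall(X<:S).T$; from $\Theta\vdash t:\forall(X<:S).T$ and $\Theta\vdash S'<:S$ infer $\Theta\vdash t\{S'\}:T[S'/X]$.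 For a context or term, $[X\wedge S/X]$ denotes substituting $X\wedge S$ for the type variable $X$ in all types occurring in it (type annotations, bounds, assumption types). *)

theory Defs
  imports Main
begin

text \<open>System F-meet with de Bruijn indices (types up to alpha-conversion).
  Type variables and term variables live in separate index spaces:
  a type variable index i refers to the i-th type binding counted from the
  most recent one; a term variable index i refers to the i-th term binding
  counted from the most recent one.  Contexts are lists, oldest binding first.\<close>

datatype ty = Top | TVar nat | Arr ty ty | All ty | Meet ty ty

datatype tm = Tp | Var nat | Abs ty tm | TAbs ty tm | App tm tm | TApp tm ty

datatype bind = TB ty | VB ty

fun shift :: "nat \<Rightarrow> nat \<Rightarrow> ty \<Rightarrow> ty" where
  "shift d c Top = Top"
| "shift d c (TVar i) = (if i < c then TVar i else TVar (i + d))"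
| "shift d c (Arr S T) = Arr (shift d c S) (shift d c T)"
| "shift d c (All T) = All (shift d (Suc c) T)"
| "shift d c (Meet S T) = Meet (shift d c S) (shift d c T)"

text \<open>tsubst k U T: capture-avoiding T[U/X] where X has index k; X is removed.\<close>
fun tsubst :: "nat \<Rightarrow> ty \<Rightarrow> ty \<Rightarrow> ty" where
  "tsubst k U Top = Top"
| "tsubst k U (TVar i) = (if i < k then TVar i else if i = k then U else TVar (i - 1))"
| "tsubst k U (Arr S T) = Arr (tsubst k U S) (tsubst k U T)"
| "tsubst k U (All T) = All (tsubst (Suc k) (shift 1 0 U) T)"
| "tsubst k U (Meet S T) = Meet (tsubst k U S) (tsubst k U T)"

text \<open>msubst k U T: T[X \<and> U / X] where X has index k (X stays bound).\<close>
fun msubst :: "nat \<Rightarrow> ty \<Rightarrow> ty \<Rightarrow> ty" where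
  "msubst k U Top = Top"
| "msubst k U (TVar i) = (if i = k then Meet (TVar i) U else TVar i)"
| "msubst k U (Arr S T) = Arr (msubst k U S) (msubst k U T)"
| "msubst k U (All T) = All (msubst (Suc k) (shift 1 0 U) T)"
| "msubst k U (Meet S T) = Meet (msubst k U S) (msubst k U T)"

fun tm_msubst :: "nat \<Rightarrow> ty \<Rightarrow> tm \<Rightarrow> tm" where
  "tm_msubst k U Tp = Tp"
| "tm_msubst k U (Var i) = Var i"
| "tm_msubst k U (Abs T t) = Abs (msubst k U T) (tm_msubst k U t)"
| "tm_msubst k U (TAbs T t) = TAbs (msubst k U T) (tm_msubst (Suc k) (shift 1 0 U) t)"
| "tm_msubst k U (App s t) = App (tm_msubst k U s) (tm_msubst k U t)"
| "tm_msubst k U (TApp t T) = TApp (tm_msubst k U t) (msubst k U T)"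

text \<open>Context substitution Theta'[X \<and> U/X]; list oldest first, X has index k
  relative to the first entry.\<close>
fun csubst :: "nat \<Rightarrow> ty \<Rightarrow> bind list \<Rightarrow> bind list" where
  "csubst k U [] = []"
| "csubst k U (TB T # G) = TB (msubst k U T) # csubst (Suc k) (shift 1 0 U) G"
| "csubst k U (VB T # G) = VB (msubst k U T) # csubst k U G"

fun is_TB :: "bind \<Rightarrow> bool" where
  "is_TB (TB _) = True" | "is_TB (VB _) = False"

fun bty :: "bind \<Rightarrow> ty" where
  "bty (TB T) = T" | "bty (VB T) = T"

definition ntb :: "bind list \<Rightarrow> nat" where
  "ntb G = length (filter is_TB G)"

text \<open>Lookups on a context given newest-first; results are shifted to be
  valid in the whole context.\<close>
fun tlookup :: "bind list \<Rightarrow> nat \<Rightarrow> ty option" where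
  "tlookup [] i = None"
| "tlookup (TB T # G) 0 = Some (shift 1 0 T)"
| "tlookup (TB T # G) (Suc i) = map_option (shift 1 0) (tlookup G i)"
| "tlookup (VB T # G) i = tlookup G i"

fun vlookup :: "bind list \<Rightarrow> nat \<Rightarrow> ty option" where
  "vlookup [] i = None"
| "vlookup (VB T # G) 0 = Some T"
| "vlookup (VB T # G) (Suc i) = vlookup G i"
| "vlookup (TB T # G) i = map_option (shift 1 0) (vlookup G i)"

fun wf_ty :: "nat \<Rightarrow> ty \<Rightarrow> bool" where
  "wf_ty n Top = True"
| "wf_ty n (TVar i) = (i < n)"
| "wf_ty n (Arr S T) = (wf_ty n S \<and> wf_ty n T)"
| "wf_ty n (All T) = wf_ty (Suc n) T"
| "wf_ty n (Meet S T) = (wf_ty n S \<and> wf_ty n T)"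

definition wf_ctx :: "bind list \<Rightarrow> bool" where
  "wf_ctx G = (\<forall>j < length G. wf_ty (ntb (take j G)) (bty (G ! j)))"

inductive sub :: "bind list \<Rightarrow> ty \<Rightarrow> ty \<Rightarrow> bool" where
  SVar: "tlookup (rev G) i = Some T \<Longrightarrow> sub G (TVar i) T"
| STop: "sub G T Top"
| SRefl: "sub G T T"
| STrans: "sub G S U \<Longrightarrow> sub G U T \<Longrightarrow> sub G S T"
| SArr: "sub G S' S \<Longrightarrow> sub G T T' \<Longrightarrow> sub G (Arr S T) (Arr S' T')"
| SAll: "sub (G @ [TB Top]) S T \<Longrightarrow> sub G (All S) (All T)"
| SMeet1: "sub G (Meet S S') S"
| SMeet2: "sub G (Meet S S') S'"
| SMeet3: "sub G T S \<Longrightarrow> sub G T S' \<Longrightarrow> sub G T (Meet S S')"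

inductive typing :: "bind list \<Rightarrow> tm \<Rightarrow> ty \<Rightarrow> bool" where
  TyTop: "typing G Tp Top"
| TyVar: "vlookup (rev G) i = Some T \<Longrightarrow> typing G (Var i) T"
| TySub: "typing G t T \<Longrightarrow> sub G T T' \<Longrightarrow> typing G t T'"
| TyAbs: "typing (G @ [VB S]) t T \<Longrightarrow> typing G (Abs S t) (Arr S T)"
| TyApp: "typing G t (Arr S T) \<Longrightarrow> typing G s S \<Longrightarrow> typing G (App t s) T"
| TyTAbs: "typing (G @ [TB Top]) t T \<Longrightarrow> typing G (TAbs Top t) (All T)"
| TyTApp: "typing G t (All T) \<Longrightarrow> sub G S' Top \<Longrightarrow> typing G (TApp t S') (tsubst 0 S' T)"

end

theory Submission
  imports Defs
begin

text \<open>Relaxing the bound of \<open>X\<close> from \<open>S\<close> to \<open>\<top>\<close> loses only the axiom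
  \<open>X <: S\<close>, and after the substitution that axiom becomes \<open>X \<and> S <: S\<close>, an instance
  of the meet rule. Every other rule commutes with \<open>[X \<and> S/X]\<close>; the only nontrivial
  case is type application, where \<open>[X \<and> S/X]\<close> commutes with \<open>T[S'/Y]\<close>.\<close>

lemma shift_add: "shift a c (shift b c T) = shift (a + b) c T"
  by (induction T arbitrary: c) auto

lemma shift_0: "shift 0 c T = T"
  by (induction T arbitrary: c) auto

lemma shift_shift_swap: "c \<le> j \<Longrightarrow> shift 1 (Suc j) (shift 1 c U) = shift 1 c (shift 1 j U)"
  by (induction U arbitrary: c j) auto

lemma tsubst_shift_cancel: "tsubst j V (shift (Suc 0) j U) = U"
  by (induction U arbitrary: j V) auto

lemma msubst_shift_id: "c \<le> k \<Longrightarrow> k < c + d \<Longrightarrow> msubst k U (shift d c T) = shift d c T"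
  by (induction T arbitrary: c k U) auto

lemma shift_msubst:
  "c \<le> k \<Longrightarrow> shift 1 c (msubst k U V) = msubst (Suc k) (shift 1 c U) (shift 1 c V)"
proof (induction V arbitrary: c k U)
  case (All V)
  then show ?case using shift_shift_swap[of 0 c U] by auto
qed auto

lemma msubst_tsubst: "j \<le> k \<Longrightarrow>
  msubst k U (tsubst j V T) = tsubst j (msubst k U V) (msubst (Suc k) (shift 1 j U) T)"
proof (induction T arbitrary: j k U V)
  case (TVar i)
  then show ?case by (auto simp: tsubst_shift_cancel)
next
  case (All T)
  then show ?case using shift_msubst[of 0 k U V] shift_shift_swap[of 0 j U] by auto
qed auto

lemma ntb_simps [simp]:
  "ntb [] = 0" "ntb (G @ [TB T]) = Suc (ntb G)" "ntb (G @ [VB T]) = ntb G"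
  "ntb (TB T # G) = Suc (ntb G)" "ntb (VB T # G) = ntb G"
  by (auto simp: ntb_def)

lemma ntb_append [simp]: "ntb (G @ H) = ntb G + ntb H"
  by (simp add: ntb_def)

lemma csubst_append:
  "csubst k U (G @ H) = csubst k U G @ csubst (k + ntb G) (shift (ntb G) 0 U) H"
proof (induction G arbitrary: k U)
  case Nil
  then show ?case by (simp add: shift_0)
next
  case (Cons b G)
  then show ?case by (cases b) (auto simp: shift_add)
qed

lemma csubst_snoc [simp]:
  "csubst k U (G @ [TB T]) = csubst k U G @ [TB (msubst (k + ntb G) (shift (ntb G) 0 U) T)]"
  "csubst k U (G @ [VB T]) = csubst k U G @ [VB (msubst (k + ntb G) (shift (ntb G) 0 U) T)]"
  by (auto simp: csubst_append)

text \<open>In \<open>\<Theta>, X <: S, \<Theta>'\<close> the variable \<open>X\<close> has index \<open>ntb \<Theta>'\<close>, and \<open>S\<close> must be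
  lifted over \<open>\<Theta>'\<close> and over \<open>X\<close> itself.\<close>

abbreviation relax_ctx :: "bind list \<Rightarrow> ty \<Rightarrow> bind list \<Rightarrow> bind list" where
  "relax_ctx \<Theta> S \<Theta>' \<equiv> \<Theta> @ [TB Top] @ csubst 0 (shift 1 0 S) \<Theta>'"

abbreviation meet_subst :: "bind list \<Rightarrow> ty \<Rightarrow> ty \<Rightarrow> ty" where
  "meet_subst \<Theta>' S \<equiv> msubst (ntb \<Theta>') (shift (Suc (ntb \<Theta>')) 0 S)"

abbreviation tm_meet_subst :: "bind list \<Rightarrow> ty \<Rightarrow> tm \<Rightarrow> tm" where
  "tm_meet_subst \<Theta>' S \<equiv> tm_msubst (ntb \<Theta>') (shift (Suc (ntb \<Theta>')) 0 S)"

lemma shift_meet_subst: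
  "shift (Suc 0) 0 (meet_subst \<Theta>' S T) =
    msubst (Suc (ntb \<Theta>')) (shift (Suc (Suc (ntb \<Theta>'))) 0 S) (shift (Suc 0) 0 T)"
  using shift_msubst[of 0 "ntb \<Theta>'" "shift (Suc (ntb \<Theta>')) 0 S" T] by (simp add: shift_add)

lemma tlookup_bound_var:
  "tlookup (rev (\<Theta> @ [TB S] @ \<Theta>')) (ntb \<Theta>') = Some (shift (Suc (ntb \<Theta>')) 0 S)"
proof (induction \<Theta>' rule: rev_induct)
  case (snoc b \<Theta>')
  then show ?case by (cases b) (auto simp: shift_add)
qed simp

lemma tlookup_relax_ctx:
  "tlookup (rev (relax_ctx \<Theta> S \<Theta>')) i =
    (if i = ntb \<Theta>' then Some Top
     else map_option (meet_subst \<Theta>' S) (tlookup (rev (\<Theta> @ [TB S] @ \<Theta>')) i))"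
proof (induction \<Theta>' arbitrary: i rule: rev_induct)
  case Nil
  then show ?case
    by (cases i) (auto simp: option.map_comp o_def msubst_shift_id intro!: option.map_cong)
next
  case (snoc b \<Theta>')
  then show ?case
    by (cases b; cases i) (auto simp: option.map_comp o_def shift_meet_subst shift_add intro!: option.map_cong)
qed

lemma vlookup_relax_ctx:
  "vlookup (rev (relax_ctx \<Theta> S \<Theta>')) i =
    map_option (meet_subst \<Theta>' S) (vlookup (rev (\<Theta> @ [TB S] @ \<Theta>')) i)"
proof (induction \<Theta>' arbitrary: i rule: rev_induct)
  case Nil
  then show ?case by (auto simp: option.map_comp o_def msubst_shift_id intro!: option.map_cong)
next
  case (snoc b \<Theta>')
  then show ?case
    by (cases b; cases i) (auto simp: option.map_comp o_def shift_meet_subst shift_add intro!: option.map_cong)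
qed

lemma sub_meet_subst:
  assumes "sub G A B" and "G = \<Theta> @ [TB S] @ \<Theta>'"
  shows "sub (relax_ctx \<Theta> S \<Theta>') (meet_subst \<Theta>' S A) (meet_subst \<Theta>' S B)"
  using assms
proof (induction arbitrary: \<Theta>' rule: sub.induct)
  case (SVar G i T)
  show ?case
  proof (cases "i = ntb \<Theta>'")
    case True
    then have "T = shift (Suc (ntb \<Theta>')) 0 S"
      using SVar tlookup_bound_var[of \<Theta> S \<Theta>'] by simp
    with True show ?thesis by (simp add: msubst_shift_id sub.SMeet2)
  next
    case False
    with SVar show ?thesis using tlookup_relax_ctx[of \<Theta> S \<Theta>' i] by (auto intro: sub.SVar)
  qed
next
  case (SAll G A B)
  with SAll.IH[of "\<Theta>' @ [TB Top]"] show ?case by (auto simp: shift_add intro!: sub.SAll)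
qed (auto intro: sub.intros)

lemma typing_meet_subst:
  assumes "typing G t T" and "G = \<Theta> @ [TB S] @ \<Theta>'"
  shows "typing (relax_ctx \<Theta> S \<Theta>') (tm_meet_subst \<Theta>' S t) (meet_subst \<Theta>' S T)"
  using assms
proof (induction arbitrary: \<Theta>' rule: typing.induct)
  case (TyVar G i T)
  then show ?case using vlookup_relax_ctx[of \<Theta> S \<Theta>' i] by (auto intro: typing.TyVar)
next
  case (TySub G t T T')
  then show ?case using sub_meet_subst by (blast intro: typing.TySub)
next
  case (TyAbs G A t T)
  with TyAbs.IH[of "\<Theta>' @ [VB A]"] show ?case by (auto simp: shift_add intro!: typing.TyAbs)
next
  case (TyTAbs G t T)
  with TyTAbs.IH[of "\<Theta>' @ [TB Top]"] show ?case by (auto simp: shift_add intro!: typing.TyTAbs)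
next
  case (TyTApp G t T S')
  then show ?case by (auto simp: msubst_tsubst shift_add intro!: typing.TyTApp sub.STop)
qed (auto intro: typing.intros)

theorem lemma5p3:
  assumes "wf_ctx (\<Theta> @ [TB S] @ \<Theta>')"
      and "typing (\<Theta> @ [TB S] @ \<Theta>') t T"
  shows "typing (\<Theta> @ [TB Top] @ csubst 0 (shift 1 0 S) \<Theta>')
           (tm_msubst (ntb \<Theta>') (shift (Suc (ntb \<Theta>')) 0 S) t)
           (msubst (ntb \<Theta>') (shift (Suc (ntb \<Theta>')) 0 S) T)"
  using typing_meet_subst[OF assms(2) refl] .

end
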